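(* Let $\eta>0$, $\alpha\in(0,1)$, $C\ge1$, and run the generalized share algorithm with the mixing rule $\hat p_{j,t}=(1-\alpha)v_{j,t}+\alpha\,w_{j,t}/Z_t$ for $t\ge2$, where $Z_t=\sum_{i=1}^dw_{i,t}$ and the nonnegative weights $w_{j,t}$ (which may depend on the past and current pre-weights) satisfy, for all $j=1,\dots,d$ and all $t\ge1$, $v_{j,t}\le w_{j,t}\le1$ and $C\,w_{j,t+1}\ge w_{j,t}$. Then for all $T\ge1$, all loss vectors $\ell_1,\dots,\ell_T\in[0,1]^d$ and all $u_1,\dots,u_T\in\mathbb R_+^d$, \[ \sum_{t=1}^T\|u_t\|_1\hat p_t^\top\ell_t-\sum_{t=1}^Tu_t^\top\ell_t\le\frac{n(u_1^T)\ln d}{\eta}+\frac{n(u_1^T)\,T\ln C}{\eta}+\frac\eta8\sum_{t=1}^T\|u_t\|_1+\frac{m(u_1^T)}{\eta}\ln\frac{\max_{t\le T}Z_t}{\alpha}+\frac{\sum_{t=2}^T\|u_t\|_1-m(u_1^T)}{\eta}\ln\frac1{1-\alpha}. \]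
   Context: Let $d\ge1$ and $\Delta_d=\{q\in[0,1]^d:\sum_{i=1}^d q_i=1\}$. The generalized share algorithm with learning rate $\eta>0$ and mixing functions $\psi_t:[0,1]^{td}\to\Delta_d$ ($t\ge2$) works as follows: $\hat p_1=v_1=(1/d,\dots,1/d)$. At each round $t=1,2,\dots$ it predicts $\hat p_t=(\hat p_{1,t},\dots,\hat p_{d,t})\in\Delta_d$, observes a loss vector $\ell_t=(\ell_{1,t},\dots,\ell_{d,t})\in[0,1]^d$ (arbitrary), and suffers loss $\hat p_t^\top\ell_t$. It then forms the pre-weights $v_{j,t+1}=\hat p_{j,t}e^{-\eta\ell_{j,t}}/\sum_{i=1}^d\hat p_{i,t}e^{-\eta\ell_{i,t}}$ for $j=1,\dots,d$, sets $v_{t+1}=(v_{1,t+1},\dots,v_{d,t+1})$, and defines $\hat p_{t+1}=\psi_{t+1}(V_{t+1})$ where $V_{t+1}=[v_{i,s}]_{1\le i\le d,1\le s\le t+1}$ is the $d\times(t+1)$ matrix of all pre-weights so far. For $x,y\in\mathbb R_+^d$, $D_{\mathrm{TV}}(x,y)=\sum_{i:\,x_i\ge y_i}(x_i-y_i)$; for $u_1,\dots,u_T\in\mathbb R_+^d$ (with $u_t=(u_{1,t},\dots,u_{d,t})$), $m(u_1^T)=\sum_{t=2}^T D_{\mathrm{TV}}(u_t,u_{t-1})$ and $n(u_1^T)=\sum_{i=1}^d\max_{1\le t\le T}u_{i,t}$. *)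

theory Defs
  imports Complex_Main
begin

text \<open>Conventions: experts are indexed by j < d (0-based), rounds by t \<ge> 1.
  Vectors in R^d are functions nat \<Rightarrow> real (only coordinates j < d matter).
  A d \<times> t matrix of pre-weights is a function (s :: nat) (j :: nat) \<mapsto> v_{j,s},
  zero outside 1 \<le> s \<le> t, j < d.
  A mixing rule is psi :: nat \<Rightarrow> (nat \<Rightarrow> nat \<Rightarrow> real) \<Rightarrow> (nat \<Rightarrow> real):
  psi t V is the prediction at round t \<ge> 2 computed from the matrix V = V_t.\<close>

definition uniform_vec :: "nat \<Rightarrow> nat \<Rightarrow> real" where
  "uniform_vec d = (\<lambda>j. if j < d then 1 / real d else 0)"

definition restrict_hist :: "nat \<Rightarrow> nat \<Rightarrow> (nat \<Rightarrow> nat \<Rightarrow> real) \<Rightarrow> nat \<Rightarrow> nat \<Rightarrow> real" where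
  "restrict_hist d t H = (\<lambda>s j. if 1 \<le> s \<and> s \<le> t \<and> j < d then H s j else 0)"

definition gs_pred :: "nat \<Rightarrow> (nat \<Rightarrow> (nat \<Rightarrow> nat \<Rightarrow> real) \<Rightarrow> nat \<Rightarrow> real)
    \<Rightarrow> (nat \<Rightarrow> nat \<Rightarrow> real) \<Rightarrow> nat \<Rightarrow> nat \<Rightarrow> real" where
  "gs_pred d psi H t = (if t = 1 then uniform_vec d else psi t (restrict_hist d t H))"

text \<open>gs_hist d eta psi l n: the pre-weights v_1, ..., v_{n+1} (as a function of s and j).\<close>
primrec gs_hist :: "nat \<Rightarrow> real \<Rightarrow> (nat \<Rightarrow> (nat \<Rightarrow> nat \<Rightarrow> real) \<Rightarrow> nat \<Rightarrow> real)
    \<Rightarrow> (nat \<Rightarrow> nat \<Rightarrow> real) \<Rightarrow> nat \<Rightarrow> nat \<Rightarrow> nat \<Rightarrow> real" where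
  "gs_hist d eta psi l 0 = (\<lambda>s j. if s = 1 then uniform_vec d j else 0)"
| "gs_hist d eta psi l (Suc n) =
     (let H = gs_hist d eta psi l n;
          p = gs_pred d psi H (Suc n);
          Zv = (\<Sum>i<d. p i * exp (- eta * l (Suc n) i))
      in H(Suc (Suc n) := (\<lambda>j. if j < d then p j * exp (- eta * l (Suc n) j) / Zv else 0)))"

definition gs_v :: "nat \<Rightarrow> real \<Rightarrow> (nat \<Rightarrow> (nat \<Rightarrow> nat \<Rightarrow> real) \<Rightarrow> nat \<Rightarrow> real)
    \<Rightarrow> (nat \<Rightarrow> nat \<Rightarrow> real) \<Rightarrow> nat \<Rightarrow> nat \<Rightarrow> real" where
  "gs_v d eta psi l t = gs_hist d eta psi l (t - 1) t"

definition gs_V :: "nat \<Rightarrow> real \<Rightarrow> (nat \<Rightarrow> (nat \<Rightarrow> nat \<Rightarrow> real) \<Rightarrow> nat \<Rightarrow> real)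
    \<Rightarrow> (nat \<Rightarrow> nat \<Rightarrow> real) \<Rightarrow> nat \<Rightarrow> nat \<Rightarrow> nat \<Rightarrow> real" where
  "gs_V d eta psi l t = restrict_hist d t (gs_hist d eta psi l (t - 1))"

definition gs_p :: "nat \<Rightarrow> real \<Rightarrow> (nat \<Rightarrow> (nat \<Rightarrow> nat \<Rightarrow> real) \<Rightarrow> nat \<Rightarrow> real)
    \<Rightarrow> (nat \<Rightarrow> nat \<Rightarrow> real) \<Rightarrow> nat \<Rightarrow> nat \<Rightarrow> real" where
  "gs_p d eta psi l t = gs_pred d psi (gs_hist d eta psi l (t - 1)) t"

definition share_mix :: "nat \<Rightarrow> real \<Rightarrow> (nat \<Rightarrow> (nat \<Rightarrow> nat \<Rightarrow> real) \<Rightarrow> nat \<Rightarrow> real)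
    \<Rightarrow> nat \<Rightarrow> (nat \<Rightarrow> nat \<Rightarrow> real) \<Rightarrow> nat \<Rightarrow> real" where
  "share_mix d alpha W t V = (\<lambda>j. (1 - alpha) * V t j + alpha * W t V j / (\<Sum>i<d. W t V i))"

definition norm1 :: "nat \<Rightarrow> (nat \<Rightarrow> real) \<Rightarrow> real" where
  "norm1 d x = (\<Sum>i<d. \<bar>x i\<bar>)"

definition D_TV :: "nat \<Rightarrow> (nat \<Rightarrow> real) \<Rightarrow> (nat \<Rightarrow> real) \<Rightarrow> real" where
  "D_TV d x y = (\<Sum>i\<in>{i. i < d \<and> x i \<ge> y i}. x i - y i)"

definition m_shift :: "nat \<Rightarrow> nat \<Rightarrow> (nat \<Rightarrow> nat \<Rightarrow> real) \<Rightarrow> real" where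
  "m_shift d T u = (\<Sum>t=2..T. D_TV d (u t) (u (t - 1)))"

definition n_max :: "nat \<Rightarrow> nat \<Rightarrow> (nat \<Rightarrow> nat \<Rightarrow> real) \<Rightarrow> real" where
  "n_max d T u = (\<Sum>i<d. Max ((\<lambda>t. u t i) ` {1..T}))"

end

theory Submission
  imports Defs "HOL-Probability.Hoeffding"
begin

(* The argument has three layers.
   1. Exponential weights: for a probability vector p and losses in [0,1],
      Hoeffding's lemma bounds the log-normaliser, so the loss of p exceeds the
      loss of expert k by at most (ln v'_k - ln p_k)/eta + eta/8, where v' is
      the exponentially reweighted vector.
   2. Comparator telescoping (pure real sequences): weighting these per-round
      bounds by u_{k,t} and summing over t, the terms ln v_{k,t} and ln p_{k,t}
      of consecutive rounds are compared via the two lower bounds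
      p >= (1 - alpha) v and p >= alpha w / max Z, and the drift caused by the
      reference points -ln w_{k,t} is controlled by an Abel summation using
      w_{k,t} <= C w_{k,t+1}.
   3. The algorithm: in a locale fixing one run of the algorithm we show that
      all pre-weights and predictions are positive probability vectors and
      Z_t >= 1, derive the per-expert bound, sum over experts (turning the
      min/max terms into the shift m(u) via D_TV) and obtain the regret bound. *)

section \<open>Exponential weights and Hoeffding's lemma\<close>

lemma exp_convex_01:
  fixes eta x :: real
  assumes "0 \<le> x" "x \<le> 1"
  shows "exp (- eta * x) \<le> 1 - x + x * exp (- eta)"
proof -
  have "exp ((1 - x) *\<^sub>R 0 + x *\<^sub>R (- eta)) \<le> (1 - x) * exp 0 + x * exp (- eta)"
    using assms by (intro convex_onD[OF convex_on_exp[of 1, simplified]]) auto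
  thus ?thesis by (simp add: mult.commute)
qed

lemma hoeffding_log_normaliser:
  fixes p ll :: "nat \<Rightarrow> real" and eta :: real
  assumes "eta > 0" and p_nonneg: "\<And>i. i < d \<Longrightarrow> 0 \<le> p i" and p_sum: "(\<Sum>i<d. p i) = 1"
    and loss: "\<And>i. i < d \<Longrightarrow> 0 \<le> ll i \<and> ll i \<le> 1"
  shows "ln (\<Sum>i<d. p i * exp (- eta * ll i)) \<le> - eta * (\<Sum>i<d. p i * ll i) + eta\<^sup>2 / 8"
proof -
  define q where "q = (\<Sum>i<d. p i * ll i)"
  have q0: "0 \<le> q" unfolding q_def using p_nonneg loss by (intro sum_nonneg) auto
  have "q \<le> (\<Sum>i<d. p i)"
    unfolding q_def using p_nonneg loss by (intro sum_mono) (simp add: mult_left_le)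
  hence q1: "q \<le> 1" using p_sum by simp
  have "(\<Sum>i<d. p i * exp (- eta * ll i)) \<le> (\<Sum>i<d. p i * (1 - ll i + ll i * exp (- eta)))"
    using p_nonneg loss by (intro sum_mono mult_left_mono exp_convex_01) auto
  also have "\<dots> = (\<Sum>i<d. p i) - q + q * exp (- eta)"
    unfolding q_def by (simp add: algebra_simps sum.distrib sum_subtractf sum_distrib_left sum_distrib_right)
  also have "\<dots> = exp (- eta) * (1 + (1 - q) * (exp eta - 1))"
    using p_sum by (simp add: algebra_simps exp_minus field_simps)
  finally have le: "(\<Sum>i<d. p i * exp (- eta * ll i)) \<le> exp (- eta) * (1 + (1 - q) * (exp eta - 1))" .
  have "exp (- eta) \<le> (\<Sum>i<d. p i * exp (- eta * ll i))"
  proof -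
    have "exp (- eta) = (\<Sum>i<d. p i * exp (- eta))"
      using p_sum by (simp add: sum_distrib_right[symmetric])
    also have "\<dots> \<le> (\<Sum>i<d. p i * exp (- eta * ll i))"
      using p_nonneg loss \<open>eta > 0\<close> by (intro sum_mono mult_left_mono) auto
    finally show ?thesis .
  qed
  then have mgf_pos: "0 < (\<Sum>i<d. p i * exp (- eta * ll i))"
    using exp_gt_zero less_le_trans by blast
  have pos: "0 < 1 + (1 - q) * (exp eta - 1)"
    using q1 \<open>eta > 0\<close> by (smt (verit) mult_nonneg_nonneg one_le_exp_iff)
  have "ln (\<Sum>i<d. p i * exp (- eta * ll i)) \<le> ln (exp (- eta) * (1 + (1 - q) * (exp eta - 1)))"
    using le mgf_pos by simp
  also have "\<dots> = - eta + ln (1 + (1 - q) * (exp eta - 1))"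
    using pos by (simp add: ln_mult)
  also have "ln (1 + (1 - q) * (exp eta - 1)) \<le> eta\<^sup>2 / 8 + eta * (1 - q)"
    using Hoeffdings_lemma_aux[of eta "1 - q"] \<open>eta > 0\<close> q1 by simp
  finally show ?thesis unfolding q_def[symmetric] by (simp add: algebra_simps)
qed

definition exp_update :: "nat \<Rightarrow> real \<Rightarrow> (nat \<Rightarrow> real) \<Rightarrow> (nat \<Rightarrow> real) \<Rightarrow> nat \<Rightarrow> real" where
  "exp_update d eta p ll j = p j * exp (- eta * ll j) / (\<Sum>i<d. p i * exp (- eta * ll i))"

lemma exp_update_simplex:
  assumes "d \<ge> 1" and p_pos: "\<And>i. i < d \<Longrightarrow> 0 < p i"
  shows "\<And>j. j < d \<Longrightarrow> 0 < exp_update d eta p ll j"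
    and "(\<Sum>j<d. exp_update d eta p ll j) = 1"
proof -
  define S where "S = (\<Sum>i<d. p i * exp (- eta * ll i))"
  have S_pos: "0 < S"
    unfolding S_def using p_pos \<open>d \<ge> 1\<close> by (intro sum_pos) (auto simp: lessThan_empty_iff)
  show "\<And>j. j < d \<Longrightarrow> 0 < exp_update d eta p ll j"
    using p_pos S_pos unfolding exp_update_def S_def[symmetric] by simp
  have "(\<Sum>j<d. exp_update d eta p ll j) = S / S"
    unfolding exp_update_def S_def by (rule sum_divide_distrib[symmetric])
  thus "(\<Sum>j<d. exp_update d eta p ll j) = 1" using S_pos by simp
qed

lemma exp_update_regret:
  fixes p ll :: "nat \<Rightarrow> real" and eta :: real
  assumes "eta > 0" "d \<ge> 1" and p_pos: "\<And>i. i < d \<Longrightarrow> 0 < p i" and p_sum: "(\<Sum>i<d. p i) = 1"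
    and loss: "\<And>i. i < d \<Longrightarrow> 0 \<le> ll i \<and> ll i \<le> 1" and "k < d"
  shows "(\<Sum>j<d. p j * ll j) - ll k
           \<le> (ln (exp_update d eta p ll k) - ln (p k)) / eta + eta / 8"
proof -
  define S where "S = (\<Sum>i<d. p i * exp (- eta * ll i))"
  have S_pos: "0 < S"
    unfolding S_def using p_pos \<open>d \<ge> 1\<close> by (intro sum_pos) (auto simp: lessThan_empty_iff)
  have hoeff: "ln S \<le> - eta * (\<Sum>j<d. p j * ll j) + eta\<^sup>2 / 8"
    unfolding S_def using hoeffding_log_normaliser[OF \<open>eta > 0\<close> _ p_sum loss] p_pos
    by (simp add: less_imp_le)
  have "ln (exp_update d eta p ll k) = ln (p k) - eta * ll k - ln S"
    using p_pos[OF \<open>k < d\<close>] S_pos unfolding exp_update_def S_def[symmetric]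
    by (simp add: ln_div ln_mult)
  hence "eta * ((\<Sum>j<d. p j * ll j) - ll k) \<le> ln (exp_update d eta p ll k) - ln (p k) + eta\<^sup>2 / 8"
    using hoeff by (simp add: algebra_simps)
  thus ?thesis
    using \<open>eta > 0\<close> by (simp add: field_simps power2_eq_square)
qed

section \<open>Comparator telescoping for real sequences\<close>

text \<open>Reindexing that pairs the weight update of round t-1 with the prediction of round t.\<close>
lemma sum_shift_pairing:
  fixes a x y :: "nat \<Rightarrow> real"
  assumes "T \<ge> 1"
  shows "(\<Sum>t=1..T. a t * (x (t + 1) - y t))
           = a T * x (T + 1) - a 1 * y 1 + (\<Sum>t=2..T. a (t - 1) * x t - a t * y t)"
  using assms
proof (induction T rule: dec_induct)
  case (step T)
  then show ?case by (simp add: algebra_simps)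
qed (simp add: algebra_simps)

text \<open>One step of the comparison: x = -ln p_t is below both y + L1 (with y = -ln v_t)
  and z + G (with z a reference point below y). Weight a = u_t, b = u_{t-1}.\<close>
lemma mixing_step:
  fixes a b x y z L1 G :: real
  assumes "0 \<le> a" "0 \<le> b" "x \<le> L1 + y" "x \<le> G + z" "z \<le> y"
  shows "a * x - b * y \<le> min a b * L1 + max (a - b) 0 * G + (a - b) * z"
proof (cases "b \<le> a")
  case True
  have "a * x = b * x + (a - b) * x" by (simp add: algebra_simps)
  also have "\<dots> \<le> b * (L1 + y) + (a - b) * (G + z)"
    using True assms by (intro add_mono mult_left_mono) auto
  finally show ?thesis using True by (simp add: algebra_simps)
next
  case False
  have "a * x \<le> a * (L1 + y)" using assms by (intro mult_left_mono) auto
  moreover have "(b - a) * z \<le> (b - a) * y" using False assms by (intro mult_left_mono) auto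
  ultimately show ?thesis using False by (simp add: algebra_simps)
qed

text \<open>The induction
  carries the slack (M - a_T) phi_T.\<close>
lemma drift_abel_bound:
  fixes a phi :: "nat \<Rightarrow> real" and M B c :: real
  assumes "T \<ge> 1"
    and a_bounds: "\<And>t. 1 \<le> t \<Longrightarrow> t \<le> T \<Longrightarrow> 0 \<le> a t \<and> a t \<le> M"
    and phi_nonneg: "\<And>t. 1 \<le> t \<Longrightarrow> t \<le> T \<Longrightarrow> 0 \<le> phi t"
    and phi_1: "phi 1 \<le> B"
    and phi_growth: "\<And>t. 1 \<le> t \<Longrightarrow> t + 1 \<le> T \<Longrightarrow> phi (t + 1) \<le> phi t + c"
    and "0 \<le> c"
  shows "a 1 * B + (\<Sum>t=2..T. (a t - a (t - 1)) * phi t) \<le> M * B + M * (real T - 1) * c"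
proof -
  have "a 1 * B + (\<Sum>t=2..T. (a t - a (t - 1)) * phi t) + (M - a T) * phi T
          \<le> M * B + M * (real T - 1) * c"
    using \<open>T \<ge> 1\<close> a_bounds phi_nonneg phi_growth
  proof (induction T rule: dec_induct)
    case base
    have "(M - a 1) * phi 1 \<le> (M - a 1) * B"
      using base.prems(1)[of 1] phi_1 by (intro mult_left_mono) auto
    then show ?case by (simp add: algebra_simps)
  next
    case (step T)
    have "(M - a T) * (phi (Suc T) - phi T) \<le> (M - a T) * c"
      using step.prems(1)[of T] step.prems(3)[of T] step.hyps by (intro mult_left_mono) auto
    also have "\<dots> \<le> M * c"
      using step.prems(1)[of T] step.hyps \<open>0 \<le> c\<close> by (intro mult_right_mono) auto
    finally have "(M - a T) * (phi (Suc T) - phi T) \<le> M * c" .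
    moreover have "a 1 * B + (\<Sum>t=2..T. (a t - a (t - 1)) * phi t) + (M - a T) * phi T
          \<le> M * B + M * (real T - 1) * c"
      using step by simp
    ultimately show ?case using step.hyps by (simp add: algebra_simps)
  qed
  moreover have "0 \<le> (M - a T) * phi T"
    using a_bounds[of T] phi_nonneg[of T] \<open>T \<ge> 1\<close> by simp
  ultimately show ?thesis by linarith
qed

text \<open>The comparator bound for one expert, stated for abstract sequences:
  lv_t and lp_t play the role of ln v_t and ln p_t, phi_t that of -ln w_t.\<close>
lemma comparator_telescoping:
  fixes a lv lp phi :: "nat \<Rightarrow> real" and M B c L1 G :: real
  assumes "T \<ge> 1"
    and a_bounds: "\<And>t. 1 \<le> t \<Longrightarrow> t \<le> T \<Longrightarrow> 0 \<le> a t \<and> a t \<le> M"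
    and phi_nonneg: "\<And>t. 1 \<le> t \<Longrightarrow> t \<le> T \<Longrightarrow> 0 \<le> phi t"
    and phi_1: "phi 1 \<le> B" and lp_1: "lp 1 = - B"
    and phi_growth: "\<And>t. 1 \<le> t \<Longrightarrow> t + 1 \<le> T \<Longrightarrow> phi (t + 1) \<le> phi t + c" and "0 \<le> c"
    and lp_vs_lv: "\<And>t. 2 \<le> t \<Longrightarrow> t \<le> T \<Longrightarrow> - lp t \<le> L1 - lv t"
    and lp_vs_phi: "\<And>t. 2 \<le> t \<Longrightarrow> t \<le> T \<Longrightarrow> - lp t \<le> G + phi t"
    and phi_vs_lv: "\<And>t. 2 \<le> t \<Longrightarrow> t \<le> T \<Longrightarrow> phi t \<le> - lv t"
    and lv_last: "lv (T + 1) \<le> 0"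
  shows "(\<Sum>t=1..T. a t * (lv (t + 1) - lp t))
           \<le> M * B + M * (real T - 1) * c
             + (\<Sum>t=2..T. min (a t) (a (t - 1)) * L1 + max (a t - a (t - 1)) 0 * G)"
proof -
  have steps: "(\<Sum>t=2..T. a (t - 1) * lv t - a t * lp t)
      \<le> (\<Sum>t=2..T. min (a t) (a (t - 1)) * L1 + max (a t - a (t - 1)) 0 * G
                    + (a t - a (t - 1)) * phi t)"
  proof (intro sum_mono)
    fix t assume "t \<in> {2..T}"
    then have "a t * (- lp t) - a (t - 1) * (- lv t)
        \<le> min (a t) (a (t - 1)) * L1 + max (a t - a (t - 1)) 0 * G + (a t - a (t - 1)) * phi t"
      using a_bounds[of t] a_bounds[of "t - 1"] lp_vs_lv[of t] lp_vs_phi[of t] phi_vs_lv[of t]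
      by (intro mixing_step) auto
    then show "a (t - 1) * lv t - a t * lp t
        \<le> min (a t) (a (t - 1)) * L1 + max (a t - a (t - 1)) 0 * G + (a t - a (t - 1)) * phi t"
      by simp
  qed
  have last: "a T * lv (T + 1) \<le> 0"
    using a_bounds[of T] \<open>T \<ge> 1\<close> lv_last by (simp add: mult_nonneg_nonpos)
  have drift: "a 1 * B + (\<Sum>t=2..T. (a t - a (t - 1)) * phi t) \<le> M * B + M * (real T - 1) * c"
    by (rule drift_abel_bound[OF \<open>T \<ge> 1\<close> a_bounds phi_nonneg phi_1 phi_growth \<open>0 \<le> c\<close>])
  have "(\<Sum>t=1..T. a t * (lv (t + 1) - lp t))
      = a T * lv (T + 1) + a 1 * B + (\<Sum>t=2..T. a (t - 1) * lv t - a t * lp t)"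
    using sum_shift_pairing[OF \<open>T \<ge> 1\<close>, of a lv lp] lp_1 by simp
  also have "\<dots> \<le> a T * lv (T + 1) + a 1 * B
      + (\<Sum>t=2..T. min (a t) (a (t - 1)) * L1 + max (a t - a (t - 1)) 0 * G)
      + (\<Sum>t=2..T. (a t - a (t - 1)) * phi t)"
    using steps by (simp add: sum.distrib)
  finally show ?thesis using last drift by linarith
qed

lemma D_TV_eq: "D_TV d x y = (\<Sum>i<d. max (x i - y i) 0)"
proof -
  have "{i. i < d \<and> x i \<ge> y i} = {i\<in>{..<d}. y i \<le> x i}" by auto
  then have "D_TV d x y = (\<Sum>i\<in>{i\<in>{..<d}. y i \<le> x i}. x i - y i)"
    unfolding D_TV_def by simp
  also have "\<dots> = (\<Sum>i<d. if y i \<le> x i then x i - y i else 0)" by (rule sum.inter_filter) simp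
  also have "\<dots> = (\<Sum>i<d. max (x i - y i) 0)" by (intro sum.cong) auto
  finally show ?thesis .
qed

lemma overlap_eq_norm1_minus_D_TV:
  assumes "\<And>i. i < d \<Longrightarrow> 0 \<le> x i"
  shows "(\<Sum>i<d. min (x i) (y i)) = norm1 d x - D_TV d x y"
proof -
  have "(\<Sum>i<d. min (x i) (y i)) = (\<Sum>i<d. \<bar>x i\<bar> - max (x i - y i) 0)"
    using assms by (intro sum.cong) auto
  then show ?thesis unfolding norm1_def D_TV_eq by (simp add: sum_subtractf)
qed

section \<open>The generalized share algorithm\<close>

lemma gs_v_Suc: "t \<ge> 1 \<Longrightarrow> j < d \<Longrightarrow>
    gs_v d eta psi l (Suc t) j = exp_update d eta (gs_p d eta psi l t) (l t) j"
  by (cases t) (auto simp: gs_v_def gs_p_def exp_update_def Let_def)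

lemma gs_p_ge2: "t \<ge> 2 \<Longrightarrow> gs_p d eta psi l t = psi t (gs_V d eta psi l t)"
  by (simp add: gs_p_def gs_pred_def gs_V_def)

lemma gs_V_current: "t \<ge> 1 \<Longrightarrow> j < d \<Longrightarrow> gs_V d eta psi l t t j = gs_v d eta psi l t j"
  by (simp add: gs_V_def gs_v_def restrict_hist_def)

text \<open>One run of the algorithm with the share mixing rule, under the hypotheses on
  the mixing weights w_t = W t V_t.  Nonnegativity of w_t is not assumed: it follows
  from w_t >= v_t > 0.\<close>
locale share_run =
  fixes d :: nat and eta alpha C :: real
    and W :: "nat \<Rightarrow> (nat \<Rightarrow> nat \<Rightarrow> real) \<Rightarrow> nat \<Rightarrow> real"
    and l :: "nat \<Rightarrow> nat \<Rightarrow> real"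
  assumes d_pos: "d \<ge> 1" and eta_pos: "eta > 0"
    and alpha_pos: "0 < alpha" and alpha_lt1: "alpha < 1" and C_ge1: "C \<ge> 1"
    and loss: "\<And>t j. t \<ge> 1 \<Longrightarrow> j < d \<Longrightarrow> 0 \<le> l t j \<and> l t j \<le> 1"
    and w_lower: "\<And>t j. t \<ge> 1 \<Longrightarrow> j < d \<Longrightarrow>
        gs_v d eta (share_mix d alpha W) l t j \<le> W t (gs_V d eta (share_mix d alpha W) l t) j"
    and w_upper: "\<And>t j. t \<ge> 1 \<Longrightarrow> j < d \<Longrightarrow>
        W t (gs_V d eta (share_mix d alpha W) l t) j \<le> 1"
    and w_slow: "\<And>t j. t \<ge> 1 \<Longrightarrow> j < d \<Longrightarrow>
        W t (gs_V d eta (share_mix d alpha W) l t) j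
          \<le> C * W (t + 1) (gs_V d eta (share_mix d alpha W) l (t + 1)) j"
begin

abbreviation v where "v \<equiv> gs_v d eta (share_mix d alpha W) l"
abbreviation p where "p \<equiv> gs_p d eta (share_mix d alpha W) l"
abbreviation w where "w \<equiv> \<lambda>t. W t (gs_V d eta (share_mix d alpha W) l t)"
abbreviation Z where "Z \<equiv> \<lambda>t. \<Sum>i<d. w t i"

lemma p_mix: "t \<ge> 2 \<Longrightarrow> j < d \<Longrightarrow> p t j = (1 - alpha) * v t j + alpha * w t j / Z t"
  by (simp add: gs_p_ge2 share_mix_def gs_V_current)

lemma mix_simplex:
  assumes "t \<ge> 1" and v_pos: "\<And>j. j < d \<Longrightarrow> 0 < v t j" and v_sum: "(\<Sum>j<d. v t j) = 1"
  shows "1 \<le> Z t" and "\<And>j. j < d \<Longrightarrow> 0 < p t j" and "(\<Sum>j<d. p t j) = 1"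
proof -
  have "(\<Sum>j<d. v t j) \<le> Z t" using w_lower \<open>t \<ge> 1\<close> by (intro sum_mono) auto
  then show Z_ge1: "1 \<le> Z t" using v_sum by simp
  have w_pos: "\<And>j. j < d \<Longrightarrow> 0 < w t j" using v_pos w_lower \<open>t \<ge> 1\<close> by (meson less_le_trans)
  have "(\<forall>j<d. 0 < p t j) \<and> (\<Sum>j<d. p t j) = 1"
  proof (cases "t = 1")
    case True
    then show ?thesis using d_pos by (simp add: gs_p_def gs_pred_def uniform_vec_def)
  next
    case False
    with \<open>t \<ge> 1\<close> have t2: "t \<ge> 2" by simp
    have "\<forall>j<d. 0 < p t j"
      using p_mix[OF t2] v_pos w_pos Z_ge1 alpha_pos alpha_lt1
      by (smt (verit) divide_pos_pos mult_pos_pos)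
    moreover have "(\<Sum>j<d. p t j) = (1 - alpha) * (\<Sum>j<d. v t j) + alpha * Z t / Z t"
      using p_mix[OF t2] by (simp add: sum.distrib sum_distrib_left sum_divide_distrib)
    ultimately show ?thesis using v_sum Z_ge1 by simp
  qed
  then show "\<And>j. j < d \<Longrightarrow> 0 < p t j" and "(\<Sum>j<d. p t j) = 1" by auto
qed

lemma v_simplex: "t \<ge> 1 \<Longrightarrow> (\<forall>j<d. 0 < v t j) \<and> (\<Sum>j<d. v t j) = 1"
proof (induction t rule: dec_induct)
  case base
  then show ?case using d_pos by (simp add: gs_v_def uniform_vec_def)
next
  case (step t)
  then have p_pos: "\<And>j. j < d \<Longrightarrow> 0 < p t j" by (intro mix_simplex) auto
  have "\<And>j. j < d \<Longrightarrow> v (Suc t) j = exp_update d eta (p t) (l t) j"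
    using gs_v_Suc[of t] step.hyps by simp
  then show ?case using exp_update_simplex[OF d_pos p_pos] by simp
qed

lemma v_pos: "t \<ge> 1 \<Longrightarrow> j < d \<Longrightarrow> 0 < v t j"
  using v_simplex by blast

lemma v_le1: "t \<ge> 1 \<Longrightarrow> j < d \<Longrightarrow> v t j \<le> 1"
  using v_simplex[of t] member_le_sum[of j "{..<d}" "v t"] by (auto intro: less_imp_le)

lemma p_pos: "t \<ge> 1 \<Longrightarrow> j < d \<Longrightarrow> 0 < p t j"
  using mix_simplex v_simplex by blast

lemma p_sum: "t \<ge> 1 \<Longrightarrow> (\<Sum>j<d. p t j) = 1"
  using mix_simplex v_simplex by blast

lemma Z_ge1: "t \<ge> 1 \<Longrightarrow> 1 \<le> Z t"
  using mix_simplex v_simplex by blast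

lemma w_pos: "t \<ge> 1 \<Longrightarrow> j < d \<Longrightarrow> 0 < w t j"
  using v_pos w_lower by (meson less_le_trans)

lemma round_regret:
  assumes "t \<ge> 1" "k < d"
  shows "(\<Sum>j<d. p t j * l t j) - l t k \<le> (ln (v (t + 1) k) - ln (p t k)) / eta + eta / 8"
  using exp_update_regret[OF eta_pos d_pos p_pos[OF \<open>t \<ge> 1\<close>] p_sum[OF \<open>t \<ge> 1\<close>] loss \<open>k < d\<close>]
    gs_v_Suc[OF \<open>t \<ge> 1\<close> \<open>k < d\<close>] assms by simp

lemma round_regret_comparator:
  assumes "t \<ge> 1" and u_nonneg: "\<And>k. k < d \<Longrightarrow> 0 \<le> u k"
  shows "norm1 d u * (\<Sum>j<d. p t j * l t j) - (\<Sum>k<d. u k * l t k)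
           \<le> (\<Sum>k<d. u k * (ln (v (t + 1) k) - ln (p t k))) / eta + eta / 8 * norm1 d u"
proof -
  have norm: "norm1 d u = (\<Sum>k<d. u k)" unfolding norm1_def using u_nonneg by simp
  have "norm1 d u * (\<Sum>j<d. p t j * l t j) - (\<Sum>k<d. u k * l t k)
      = (\<Sum>k<d. u k * ((\<Sum>j<d. p t j * l t j) - l t k))"
    unfolding norm by (simp add: sum_distrib_right sum_subtractf algebra_simps)
  also have "\<dots> \<le> (\<Sum>k<d. u k * ((ln (v (t + 1) k) - ln (p t k)) / eta + eta / 8))"
    using round_regret[OF \<open>t \<ge> 1\<close>] u_nonneg by (intro sum_mono mult_left_mono) auto
  also have "\<dots> = (\<Sum>k<d. u k * (ln (v (t + 1) k) - ln (p t k))) / eta + eta / 8 * norm1 d u"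
    unfolding norm
    by (simp add: sum.distrib sum_distrib_left sum_distrib_right sum_divide_distrib algebra_simps)
  finally show ?thesis .
qed

lemma p_ge_fixed_share: "t \<ge> 2 \<Longrightarrow> k < d \<Longrightarrow> (1 - alpha) * v t k \<le> p t k"
  using p_mix[of t k] w_pos[of t k] Z_ge1[of t] alpha_pos by simp

lemma p_ge_restart:
  assumes "t \<ge> 2" "k < d" "Z t \<le> Zmax"
  shows "alpha * w t k / Zmax \<le> p t k"
proof -
  have "alpha * w t k / Zmax \<le> alpha * w t k / Z t"
    using assms Z_ge1[of t] w_pos[of t k] alpha_pos by (intro divide_left_mono) auto
  also have "\<dots> \<le> p t k"
    using p_mix[of t k] v_pos[of t k] alpha_lt1 assms by simp
  finally show ?thesis .
qed

lemma expert_bound: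
  fixes a :: "nat \<Rightarrow> real" and M Zmax :: real
  assumes "T \<ge> 1" "k < d"
    and a_bounds: "\<And>t. 1 \<le> t \<Longrightarrow> t \<le> T \<Longrightarrow> 0 \<le> a t \<and> a t \<le> M"
    and Zmax: "\<And>t. 1 \<le> t \<Longrightarrow> t \<le> T \<Longrightarrow> Z t \<le> Zmax"
  shows "(\<Sum>t=1..T. a t * (ln (v (t + 1) k) - ln (p t k)))
           \<le> M * ln (real d) + M * (real T - 1) * ln C
             + (\<Sum>t=2..T. min (a t) (a (t - 1)) * ln (1 / (1 - alpha))
                          + max (a t - a (t - 1)) 0 * ln (Zmax / alpha))"
proof (rule comparator_telescoping[OF \<open>T \<ge> 1\<close> a_bounds, where phi = "\<lambda>t. - ln (w t k)"])
  show "- ln (w 1 k) \<le> ln (real d)"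
  proof -
    have "1 / real d \<le> w 1 k"
      using w_lower[of 1 k] \<open>k < d\<close> by (simp add: gs_v_def uniform_vec_def)
    then have "ln (1 / real d) \<le> ln (w 1 k)" using d_pos by (intro ln_mono) auto
    then show ?thesis using d_pos by (simp add: ln_div)
  qed
  show "ln (p 1 k) = - ln (real d)"
    using \<open>k < d\<close> d_pos by (simp add: gs_p_def gs_pred_def uniform_vec_def ln_div)
  show "- ln (w t k) \<ge> 0" if "1 \<le> t" for t
    using w_upper[of t k] w_pos[of t k] that \<open>k < d\<close> by simp
  show "- ln (w (t + 1) k) \<le> - ln (w t k) + ln C" if "1 \<le> t" for t
  proof -
    have "ln (w t k) \<le> ln (C * w (t + 1) k)"
      using w_slow[of t k] w_pos[of t k] that \<open>k < d\<close> by (intro ln_mono) auto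
    also have "\<dots> = ln C + ln (w (t + 1) k)"
      using w_pos[of "t + 1" k] \<open>k < d\<close> C_ge1 by (simp add: ln_mult)
    finally show ?thesis by simp
  qed
  show "0 \<le> ln C" using C_ge1 by simp
  show "- ln (p t k) \<le> ln (1 / (1 - alpha)) - ln (v t k)" if "2 \<le> t" for t
  proof -
    have "ln ((1 - alpha) * v t k) \<le> ln (p t k)"
      using p_ge_fixed_share[OF that \<open>k < d\<close>] v_pos[of t k] that \<open>k < d\<close> alpha_lt1
      by (intro ln_mono) auto
    then show ?thesis
      using v_pos[of t k] that \<open>k < d\<close> alpha_lt1 by (simp add: ln_mult ln_div)
  qed
  show "- ln (p t k) \<le> ln (Zmax / alpha) + - ln (w t k)" if "2 \<le> t" "t \<le> T" for t
  proof -
    have Z: "1 \<le> Zmax" using Z_ge1[of t] Zmax[of t] that by simp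
    have "ln (alpha * w t k / Zmax) \<le> ln (p t k)"
      using p_ge_restart[OF that(1) \<open>k < d\<close> Zmax[of t]] w_pos[of t k] that \<open>k < d\<close> Z alpha_pos
      by (intro ln_mono) auto
    then show ?thesis
      using w_pos[of t k] that \<open>k < d\<close> Z alpha_pos by (simp add: ln_mult ln_div)
  qed
  show "- ln (w t k) \<le> - ln (v t k)" if "2 \<le> t" for t
    using w_lower[of t k] v_pos[of t k] that \<open>k < d\<close> by simp
  show "ln (v (T + 1) k) \<le> 0"
    using v_le1[of "T + 1" k] v_pos[of "T + 1" k] \<open>k < d\<close> by simp
qed

theorem regret_bound:
  fixes T :: nat and u :: "nat \<Rightarrow> nat \<Rightarrow> real"
  assumes "T \<ge> 1" and u_nonneg: "\<And>t j. 1 \<le> t \<Longrightarrow> t \<le> T \<Longrightarrow> j < d \<Longrightarrow> 0 \<le> u t j"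
  defines "Zmax \<equiv> Max (Z ` {1..T})"
  shows "(\<Sum>t=1..T. norm1 d (u t) * (\<Sum>j<d. p t j * l t j)) - (\<Sum>t=1..T. \<Sum>j<d. u t j * l t j)
         \<le> n_max d T u * ln (real d) / eta
           + n_max d T u * real T * ln C / eta
           + eta / 8 * (\<Sum>t=1..T. norm1 d (u t))
           + m_shift d T u / eta * ln (Zmax / alpha)
           + ((\<Sum>t=2..T. norm1 d (u t)) - m_shift d T u) / eta * ln (1 / (1 - alpha))"
proof -
  define M where "M k = Max ((\<lambda>t. u t k) ` {1..T})" for k
  define L1 where "L1 = ln (1 / (1 - alpha))"
  define G where "G = ln (Zmax / alpha)"
  define R where "R t = (\<Sum>k<d. u t k * (ln (v (t + 1) k) - ln (p t k)))" for t
  have M_ge: "u t k \<le> M k" if "1 \<le> t" "t \<le> T" for t k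
    unfolding M_def using that by (intro Max_ge) auto
  have M_nonneg: "0 \<le> M k" if "k < d" for k
    using M_ge[of 1 k] u_nonneg[of 1 k] \<open>T \<ge> 1\<close> that by simp
  have "(\<Sum>t=1..T. norm1 d (u t) * (\<Sum>j<d. p t j * l t j)) - (\<Sum>t=1..T. \<Sum>j<d. u t j * l t j)
      \<le> (\<Sum>t=1..T. R t / eta + eta / 8 * norm1 d (u t))"
    unfolding sum_subtractf[symmetric] R_def
    using round_regret_comparator u_nonneg by (intro sum_mono) auto
  also have "\<dots> = (\<Sum>t=1..T. R t) / eta + eta / 8 * (\<Sum>t=1..T. norm1 d (u t))"
    by (simp add: sum.distrib sum_divide_distrib sum_distrib_left)
  finally have summed: "(\<Sum>t=1..T. norm1 d (u t) * (\<Sum>j<d. p t j * l t j))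
        - (\<Sum>t=1..T. \<Sum>j<d. u t j * l t j)
      \<le> (\<Sum>t=1..T. R t) / eta + eta / 8 * (\<Sum>t=1..T. norm1 d (u t))" .
  have "(\<Sum>t=1..T. R t) = (\<Sum>k<d. \<Sum>t=1..T. u t k * (ln (v (t + 1) k) - ln (p t k)))"
    unfolding R_def by (rule sum.swap)
  also have "\<dots> \<le> (\<Sum>k<d. M k * ln (real d) + M k * real T * ln C
       + (\<Sum>t=2..T. min (u t k) (u (t - 1) k) * L1 + max (u t k - u (t - 1) k) 0 * G))"
  proof (intro sum_mono)
    fix k assume "k \<in> {..<d}"
    have "M k * (real T - 1) * ln C \<le> M k * real T * ln C"
      using M_nonneg[of k] \<open>k \<in> {..<d}\<close> C_ge1 by (simp add: mult_right_mono algebra_simps)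
    moreover have "Z t \<le> Zmax" if "1 \<le> t" "t \<le> T" for t
      unfolding Zmax_def using that by (intro Max_ge) auto
    ultimately show "(\<Sum>t=1..T. u t k * (ln (v (t + 1) k) - ln (p t k)))
        \<le> M k * ln (real d) + M k * real T * ln C
          + (\<Sum>t=2..T. min (u t k) (u (t - 1) k) * L1 + max (u t k - u (t - 1) k) 0 * G)"
      using expert_bound[OF \<open>T \<ge> 1\<close>, of k "\<lambda>t. u t k" "M k" Zmax] u_nonneg M_ge \<open>k \<in> {..<d}\<close>
      unfolding L1_def G_def by fastforce
  qed
  also have "\<dots> = n_max d T u * ln (real d) + n_max d T u * real T * ln C
       + L1 * (\<Sum>t=2..T. \<Sum>k<d. min (u t k) (u (t - 1) k))
       + G * (\<Sum>t=2..T. \<Sum>k<d. max (u t k - u (t - 1) k) 0)"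
    unfolding n_max_def M_def
    by (simp add: sum.distrib sum_distrib_right sum_distrib_left sum.swap[of _ "{2..T}" "{..<d}"]
        algebra_simps)
  also have "(\<Sum>t=2..T. \<Sum>k<d. min (u t k) (u (t - 1) k)) = (\<Sum>t=2..T. norm1 d (u t)) - m_shift d T u"
    unfolding m_shift_def sum_subtractf[symmetric]
    using u_nonneg by (intro sum.cong overlap_eq_norm1_minus_D_TV) auto
  also have "(\<Sum>t=2..T. \<Sum>k<d. max (u t k - u (t - 1) k) 0) = m_shift d T u"
    unfolding m_shift_def D_TV_eq ..
  finally have "(\<Sum>t=1..T. R t) / eta
      \<le> (n_max d T u * ln (real d) + n_max d T u * real T * ln C
          + L1 * ((\<Sum>t=2..T. norm1 d (u t)) - m_shift d T u) + G * m_shift d T u) / eta"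
    using eta_pos by (intro divide_right_mono) auto
  also have "\<dots> = n_max d T u * ln (real d) / eta + n_max d T u * real T * ln C / eta
      + m_shift d T u / eta * G + ((\<Sum>t=2..T. norm1 d (u t)) - m_shift d T u) / eta * L1"
    using eta_pos by (simp add: field_simps)
  finally show ?thesis
    using summed unfolding L1_def G_def by linarith
qed

end

theorem theorem3:
  fixes d :: nat and eta alpha C :: real and T :: nat
    and W :: "nat \<Rightarrow> (nat \<Rightarrow> nat \<Rightarrow> real) \<Rightarrow> nat \<Rightarrow> real"
    and l u :: "nat \<Rightarrow> nat \<Rightarrow> real"
  defines "psi \<equiv> share_mix d alpha W"
  assumes "d \<ge> 1" and "eta > 0" and "0 < alpha" and "alpha < 1" and "C \<ge> 1"
    and loss: "\<And>t j. t \<ge> 1 \<Longrightarrow> j < d \<Longrightarrow> 0 \<le> l t j \<and> l t j \<le> 1"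
    and w_lower: "\<And>t j. t \<ge> 1 \<Longrightarrow> j < d \<Longrightarrow>
        gs_v d eta psi l t j \<le> W t (gs_V d eta psi l t) j"
    and w_upper: "\<And>t j. t \<ge> 1 \<Longrightarrow> j < d \<Longrightarrow> W t (gs_V d eta psi l t) j \<le> 1"
    and w_nonneg: "\<And>t j. t \<ge> 1 \<Longrightarrow> j < d \<Longrightarrow> 0 \<le> W t (gs_V d eta psi l t) j"
    and w_slow: "\<And>t j. t \<ge> 1 \<Longrightarrow> j < d \<Longrightarrow>
        C * W (t + 1) (gs_V d eta psi l (t + 1)) j \<ge> W t (gs_V d eta psi l t) j"
    and "T \<ge> 1"
    and u_nonneg: "\<And>t j. 1 \<le> t \<Longrightarrow> t \<le> T \<Longrightarrow> j < d \<Longrightarrow> 0 \<le> u t j"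
  shows "(\<Sum>t=1..T. norm1 d (u t) * (\<Sum>j<d. gs_p d eta psi l t j * l t j))
           - (\<Sum>t=1..T. \<Sum>j<d. u t j * l t j)
         \<le> n_max d T u * ln (real d) / eta
           + n_max d T u * real T * ln C / eta
           + eta / 8 * (\<Sum>t=1..T. norm1 d (u t))
           + m_shift d T u / eta
               * ln (Max ((\<lambda>t. \<Sum>i<d. W t (gs_V d eta psi l t) i) ` {1..T}) / alpha)
           + ((\<Sum>t=2..T. norm1 d (u t)) - m_shift d T u) / eta * ln (1 / (1 - alpha))"
proof -
  interpret share_run d eta alpha C W l
    using assms unfolding psi_def by unfold_locales auto
  show ?thesis
    unfolding psi_def using regret_bound[OF \<open>T \<ge> 1\<close> u_nonneg] by simp
qed

end
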